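(* Let $X\subseteq\Omega$ be club in $\Omega$ with $0\notin X$, $\Theta=\Theta_X$. Let $\alpha=\Omega\tilde\alpha>0$ (a nonzero multiple of $\Omega$), $\beta<\Omega$ and $\tau=\tau(\alpha)<\Omega$. If $\alpha+\beta\in\hat\varepsilon_{\Omega+1}\cap\mathrm{JUMP}(X)$ and $(\tau_n)_{n<\omega}$ is strictly increasing with supremum $\tau$, then $\big(\Theta(\alpha[\tau_n]+\Theta^*(\alpha+\beta))\big)_{n<\omega}$ is strictly increasing with supremum $\Theta(\alpha+\beta)$.
   Context: $\Omega$ is the first uncountable ordinal; $\varepsilon_{\Omega+1}$ the least $\varepsilon>\Omega$ with $\omega^\varepsilon=\varepsilon$. Every $0<\xi<\varepsilon_{\Omega+1}$ has a unique $\Omega$-normal form $\xi=\Omega^{\alpha}\beta+\gamma$ with $0<\beta<\Omega$, $\gamma<\Omega^{\alpha}$. $C(0)=\{0\}$, $C(\Omega^\alpha\beta+\gamma)=C(\alpha)\cup C(\gamma)\cup\{\beta\}$; $\xi^*=\max C(\xi)$. For $\theta<\Omega$: $0[\theta]=1[\theta]=0$; $(\Omega^\alpha\beta+\gamma)[\theta]=\Omega^\alpha\beta+\gamma[\theta]$ if $\gamma>0$; $(\Omega^\alpha\beta)[\theta]=\Omega^\alpha\theta$ if $\beta$ is a limit; $\Omega^{\alpha+1}[\theta]=\Omega^\alpha\theta$; $(\Omega^\alpha(\beta+1))[\theta]=\Omega^\alpha\beta+(\Omega^\alpha)[\theta]$ if $\beta>0$; $\Omega^\alpha[\theta]=\Omega^{\alpha[\theta]}$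 if $\alpha$ is a limit. $\tau(0)=0$, $\tau(\zeta+1)=1$, $\tau(\Omega^\alpha\beta+\gamma)=\tau(\gamma)$ if $\gamma>0$, $\tau(\Omega^\alpha\beta)=\beta$ if $\beta$ limit, $\tau(\Omega^\alpha(\beta+1))=\tau(\alpha)$ if $\alpha$ limit, $\tau(\Omega^{\alpha+1}(\beta+1))=\Omega$. $\Theta_X(\xi)$ is the least $\theta\in X$ with $\theta>\xi^*$ such that all $\zeta<\xi$ with $\zeta^*<\theta$ have $\Theta_X(\zeta)<\theta$. $\Omega_0=1$, $\Omega_{n+1}=\Omega^{\Omega_n}$, $\Theta_X(\varepsilon_{\Omega+1})=\sup_n\Theta_X(\Omega_n)$, $\hat\varepsilon_{\Omega+1}=\{\xi<\varepsilon_{\Omega+1}:\xi^*<\Theta_X(\varepsilon_{\Omega+1})\}$. $\mathrm{FIX}(X)$ is the set of $\xi$ with $(\xi[1])^*<\xi^*=\tau(\xi)=\Theta_X(\gamma)$ for some $\gamma>\xi$; $\mathrm{JUMP}(X)=\{0\}\cup\{\text{successors}\}\cup\mathrm{FIX}(X)$; $\Theta^*(\xi)=\Theta_X(\zeta)$ if $\xi=\zeta+1$, $\tau(\xi)$ if $\xi\in\mathrm{FIX}(X)$, and $0$ otherwise. *)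

theory Defs
  imports Main "HOL-Library.Countable_Set"
begin

text \<open>Ordinals below Omega are modelled by the elements of a well-ordered type 'w
  which is uncountable but all of whose proper initial segments are countable
  (so 'w has order type omega_1).\<close>

definition omega1_like :: "'w::wellorder itself \<Rightarrow> bool" where
  "omega1_like _ \<longleftrightarrow> uncountable (UNIV :: 'w set) \<and> (\<forall>x::'w. countable {..<x})"

definition w0 :: "'w::wellorder" where "w0 = (LEAST x. True)"
definition wsucc :: "'w::wellorder \<Rightarrow> 'w" where "wsucc b = (LEAST c. b < c)"
definition w1 :: "'w::wellorder" where "w1 = wsucc w0"
definition wpred :: "'w::wellorder \<Rightarrow> 'w" where "wpred b = (THE c. b = wsucc c)"
definition wlimit :: "'w::wellorder \<Rightarrow> bool" where
  "wlimit b \<longleftrightarrow> b \<noteq> w0 \<and> \<not> (\<exists>c. b = wsucc c)"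

definition wadd :: "'w::wellorder \<Rightarrow> 'w \<Rightarrow> 'w" where
  "wadd a b = (THE c. a \<le> c \<and> (\<exists>f. strict_mono_on {..<b} f \<and> f ` {..<b} = {a..<c}))"

definition wsup :: "'w::wellorder set \<Rightarrow> 'w" where
  "wsup S = (LEAST s. \<forall>x\<in>S. x \<le> s)"

text \<open>T [(a1,b1),...,(ak,bk)] denotes Omega^a1 * b1 + ... + Omega^ak * bk.\<close>
datatype 'w tm = T "('w tm \<times> 'w) list"

primrec untm :: "'w tm \<Rightarrow> ('w tm \<times> 'w) list" where "untm (T xs) = xs"

fun lt :: "'w::wellorder tm \<Rightarrow> 'w tm \<Rightarrow> bool" where
  "lt (T []) (T []) = False"
| "lt (T []) (T (y#ys)) = True"
| "lt (T (x#xs)) (T []) = False"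
| "lt (T ((a,b)#xs)) (T ((c,d)#ys)) =
     (lt a c \<or> (a = c \<and> (b < d \<or> (b = d \<and> lt (T xs) (T ys)))))"

fun nf :: "'w::wellorder tm \<Rightarrow> bool" where
  "nf (T []) = True"
| "nf (T ((a,b)#xs)) = (nf a \<and> b \<noteq> w0 \<and> nf (T xs) \<and>
      (case xs of [] \<Rightarrow> True | (c,d)#_ \<Rightarrow> lt c a))"

definition cw :: "'w::wellorder \<Rightarrow> 'w tm" where
  "cw b = (if b = w0 then T [] else T [(T [], b)])"

definition one :: "'w::wellorder tm" where "one = T [(T [], w1)]"
definition Omega :: "'w::wellorder tm" where "Omega = T [(one, w1)]"

definition mono :: "'w::wellorder tm \<Rightarrow> 'w \<Rightarrow> 'w tm" where
  "mono a b = (if b = w0 then T [] else T [(a, b)])"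

text \<open>xi + delta for delta < Omega.\<close>
fun tadd :: "'w::wellorder tm \<Rightarrow> 'w \<Rightarrow> 'w tm" where
  "tadd (T xs) d = (if d = w0 then T xs
     else if xs \<noteq> [] \<and> fst (last xs) = T [] then T (butlast xs @ [(T [], wadd (snd (last xs)) d)])
     else T (xs @ [(T [], d)]))"

definition tsucc :: "'w::wellorder tm \<Rightarrow> bool" where
  "tsucc a \<longleftrightarrow> (\<exists>z. nf z \<and> a = tadd z w1)"
definition tpred :: "'w::wellorder tm \<Rightarrow> 'w tm" where
  "tpred a = (THE z. nf z \<and> a = tadd z w1)"

fun Cs :: "'w::wellorder tm \<Rightarrow> 'w set" where
  "Cs (T []) = {w0}"
| "Cs (T ((a,b)#xs)) = Cs a \<union> Cs (T xs) \<union> {b}"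

definition star :: "'w::wellorder tm \<Rightarrow> 'w" where "star x = Max (Cs x)"

fun fs :: "'w::wellorder tm \<Rightarrow> 'w \<Rightarrow> 'w tm" where
  "fs (T []) \<theta> = T []"
| "fs (T [(a,b)]) \<theta> =
     (let p = (if a = T [] then T []
               else if tsucc a then mono (tpred a) \<theta>
               else T [(fs a \<theta>, w1)])
      in if wlimit b then mono a \<theta>
         else if b = w1 then p
         else T ((a, wpred b) # untm p))"
| "fs (T ((a,b)#x#xs)) \<theta> = T ((a,b) # untm (fs (T (x#xs)) \<theta>))"

fun tau :: "'w::wellorder tm \<Rightarrow> 'w tm" where
  "tau (T []) = T []"
| "tau (T [(a,b)]) =
     (if wlimit b then cw b
      else if a = T [] then one
      else if tsucc a then Omega
      else tau a)"
| "tau (T ((a,b)#x#xs)) = tau (T (x#xs))"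

definition to_w :: "'w::wellorder tm \<Rightarrow> 'w" where
  "to_w t = (if t = T [] then w0 else snd (hd (untm t)))"

definition tmrel :: "('w::wellorder tm \<times> 'w tm) set" where
  "tmrel = {(z, x). nf z \<and> nf x \<and> lt z x}"

definition Theta :: "'w::wellorder set \<Rightarrow> 'w tm \<Rightarrow> 'w" where
  "Theta X = wfrec tmrel (\<lambda>f x. LEAST \<theta>. \<theta> \<in> X \<and> star x < \<theta> \<and>
      (\<forall>z. nf z \<and> lt z x \<and> star z < \<theta> \<longrightarrow> f z < \<theta>))"

primrec Om :: "nat \<Rightarrow> 'w::wellorder tm" where
  "Om 0 = one"
| "Om (Suc n) = T [(Om n, w1)]"

definition ThetaEps :: "'w::wellorder set \<Rightarrow> 'w" where
  "ThetaEps X = wsup (range (\<lambda>n. Theta X (Om n)))"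

definition hatEps :: "'w::wellorder set \<Rightarrow> 'w tm set" where
  "hatEps X = {x. nf x \<and> star x < ThetaEps X}"

definition FIX :: "'w::wellorder set \<Rightarrow> 'w tm set" where
  "FIX X = {x. nf x \<and> star (fs x w1) < star x \<and> tau x = cw (star x) \<and>
              (\<exists>g. nf g \<and> lt x g \<and> Theta X g = star x)}"

definition JUMP :: "'w::wellorder set \<Rightarrow> 'w tm set" where
  "JUMP X = {x. nf x \<and> (x = T [] \<or> tsucc x \<or> x \<in> FIX X)}"

definition ThetaStar :: "'w::wellorder set \<Rightarrow> 'w tm \<Rightarrow> 'w" where
  "ThetaStar X x = (if tsucc x then Theta X (tpred x)
                    else if x \<in> FIX X then to_w (tau x) else w0)"

definition club :: "'w::wellorder set \<Rightarrow> bool" where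
  "club X \<longleftrightarrow> (\<forall>a. \<exists>x\<in>X. a < x) \<and>
     (\<forall>a. wlimit a \<and> (\<forall>b<a. \<exists>x\<in>X. b < x \<and> x < a) \<longrightarrow> a \<in> X)"

end

theory Submission
  imports Defs
begin

(* Write d = Theta*(alpha + beta) and u n = Theta(alpha[t n] + d).  As alpha is a multiple of
   Omega, alpha[theta] + d arises from alpha[theta] by appending the coefficient d, and every
   coefficient of alpha[theta] is at most alpha* or equal to theta.  Since d bounds
   (alpha + beta)*, this puts (alpha[t n] + d)* below u (n + 1) and below Theta(alpha + beta),
   while alpha[t n] + d < alpha[t (n + 1)] + d < alpha; so u is increasing and bounded by
   Theta(alpha + beta).  Conversely, the supremum s of u lies in the club X, exceeds
   (alpha + beta)*, and dominates Theta z for every z < alpha + beta with z* < s: if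
   alpha <= z, then Theta z <= d by the choice of Theta* (Theta of the predecessor when beta is
   a successor, a Theta-value of a term above alpha + beta when alpha + beta is in FIX); if
   z < alpha, then z < alpha[t n] for some n, as the alpha[theta] with theta < tau are cofinal
   in alpha.  Minimality of Theta(alpha + beta) gives Theta(alpha + beta) <= s. *)

section \<open>Countable ordinals\<close>

lemma w0_le [simp]: "(w0::'w::wellorder) \<le> x"
  unfolding w0_def by (rule Least_le) simp

lemma not_less_w0 [simp]: "\<not> (x::'w::wellorder) < w0"
  by (simp add: not_less)

lemma wsucc_le: "(b::'w::wellorder) < c \<Longrightarrow> wsucc b \<le> c"
  unfolding wsucc_def by (rule Least_le)

lemma wlimit_wsucc_less: "wlimit b \<Longrightarrow> (c::'w::wellorder) < b \<Longrightarrow> wsucc c < b"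
  using wsucc_le[of c b] unfolding wlimit_def by (auto simp: le_less)

lemma wsup_le: "(\<And>n. u n \<le> h) \<Longrightarrow> wsup (range u) \<le> (h::'w::wellorder)"
  unfolding wsup_def by (rule Least_le) auto

lemma less_wsupD: "b < wsup (range u) \<Longrightarrow> \<exists>n. b < (u n::'w::wellorder)"
  using wsup_le[of u b] by (meson not_le)

locale omega1 =
  fixes W :: "'w::wellorder itself"
  assumes omega1_like: "omega1_like W"
begin

lemma countable_bounded:
  assumes "countable (A::'w set)"
  shows "\<exists>h. \<forall>a\<in>A. a < h"
proof -
  have "countable {..a}" for a :: 'w
  proof -
    have "{..a} = insert a {..<a}" by auto
    then show ?thesis using omega1_like unfolding omega1_like_def by simp
  qed
  then have "countable (\<Union>a\<in>A. {..a})" using assms by blast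
  moreover have "uncountable (UNIV::'w set)" using omega1_like unfolding omega1_like_def by blast
  ultimately obtain h where "h \<notin> (\<Union>a\<in>A. {..a})" by (metis UNIV_eq_I)
  then show ?thesis by (auto simp: not_le)
qed

lemma less_wsucc: "(b::'w) < wsucc b"
proof -
  obtain h where "b < h" using countable_bounded[of "{b}"] by auto
  then show ?thesis unfolding wsucc_def by (rule LeastI)
qed

lemma less_wsucc_iff: "(c::'w) < wsucc b \<longleftrightarrow> c \<le> b"
  using less_wsucc[of b] wsucc_le[of b c] by (meson leD le_less_trans linorder_le_less_linear)

lemma strict_mono_wsucc: "strict_mono (wsucc :: 'w \<Rightarrow> 'w)"
  by (rule strict_monoI) (meson less_wsucc less_wsucc_iff not_le wsucc_le le_less_trans)

lemma wsucc_less_wsucc_iff: "wsucc b < wsucc (c::'w) \<longleftrightarrow> b < c"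
  using strict_mono_wsucc by (rule strict_mono_less)

lemma wsucc_inject: "wsucc b = wsucc (c::'w) \<longleftrightarrow> b = c"
  using strict_mono_wsucc by (rule strict_mono_eq)

lemma wpred_wsucc: "wpred (wsucc c) = (c::'w)"
  unfolding wpred_def using wsucc_inject by auto

lemma wsucc_neq_w0: "wsucc c \<noteq> (w0::'w)"
  using less_wsucc[of c] by auto

lemma w0_less_w1: "w0 < (w1::'w)"
  unfolding w1_def by (rule less_wsucc)

lemma w1_le_iff: "w1 \<le> (x::'w) \<longleftrightarrow> x \<noteq> w0"
proof
  show "w1 \<le> x \<Longrightarrow> x \<noteq> w0" using w0_less_w1 by auto
  show "x \<noteq> w0 \<Longrightarrow> w1 \<le> x" unfolding w1_def by (rule wsucc_le) (simp add: le_neq_trans)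
qed

lemma wsucc_eq_w1_iff: "wsucc c = (w1::'w) \<longleftrightarrow> c = w0"
  unfolding w1_def by (rule wsucc_inject)

lemma wsup_upper:
  assumes "countable S" "(x::'w) \<in> S"
  shows "x \<le> wsup S"
proof -
  obtain h where "\<forall>y\<in>S. y < h" using countable_bounded[OF assms(1)] by blast
  then have "\<forall>y\<in>S. y \<le> h" by (auto intro: less_imp_le)
  then have "\<forall>y\<in>S. y \<le> wsup S" unfolding wsup_def by (rule LeastI)
  then show ?thesis using assms(2) by blast
qed

lemma less_wsup:
  assumes u: "strict_mono (u::nat \<Rightarrow> 'w)"
  shows "u n < wsup (range u)"
proof -
  have "u n < u (Suc n)" using u by (simp add: strict_mono_Suc_iff)
  also have "\<dots> \<le> wsup (range u)" by (rule wsup_upper) auto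
  finally show ?thesis .
qed

lemma wlimit_wsup:
  assumes u: "strict_mono (u::nat \<Rightarrow> 'w)"
  shows "wlimit (wsup (range u))"
  unfolding wlimit_def
proof (intro conjI notI)
  assume "wsup (range u) = w0"
  then show False using less_wsup[OF u, of 0] by simp
next
  assume "\<exists>c. wsup (range u) = wsucc c"
  then obtain c where c: "wsup (range u) = wsucc c" by blast
  then obtain n where "c < u n" using less_wsupD[of c u] less_wsucc[of c] by auto
  then show False using less_wsup[OF u, of n] c by (simp add: less_wsucc_iff)
qed

lemma w1_less_wsup:
  assumes "strict_mono (t :: nat \<Rightarrow> 'w)"
  shows "w1 < wsup (range t)"
proof -
  have "t 0 < t 1" using assms by (simp add: strict_mono_less)
  then have "t 1 \<noteq> w0" by auto
  then have "w1 \<le> t 1" using w1_le_iff by blast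
  also have "\<dots> < wsup (range t)" using assms by (rule less_wsup)
  finally show ?thesis .
qed

lemma club_limit_mem:
  assumes "club X" "wlimit a" "\<And>b. b < a \<Longrightarrow> \<exists>x\<in>X. b < x \<and> x < a"
  shows "a \<in> X"
  using assms unfolding club_def by simp

lemma club_wsup_mem:
  assumes "club X" "strict_mono (u::nat \<Rightarrow> 'w)" "\<And>n. u (Suc n) \<in> X"
  shows "wsup (range u) \<in> X"
proof -
  have "\<exists>x\<in>X. b < x \<and> x < wsup (range u)" if b: "b < wsup (range u)" for b
  proof -
    obtain n where "b < u n" using less_wsupD[OF b] by blast
    then show ?thesis using assms(2,3) less_wsup[OF assms(2), of "Suc n"]
      by (metis strict_mono_Suc_iff less_trans)
  qed
  then show ?thesis by (rule club_limit_mem[OF assms(1) wlimit_wsup[OF assms(2)]])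
qed

lemma club_closure_point:
  assumes "club X" and B_mono: "\<And>c c'. c \<le> c' \<Longrightarrow> B c \<le> (B c' :: 'w)"
  shows "\<exists>s\<in>X. a < s \<and> (\<forall>c<s. B c < s)"
proof -
  have "\<forall>c. \<exists>x. x \<in> X \<and> c < x" using assms(1) unfolding club_def by blast
  then obtain N where N: "\<And>c. N c \<in> X" "\<And>c. c < N c" by metis
  define u where "u = rec_nat a (\<lambda>_ c. N (max c (B c)))"
  have u_Suc: "u (Suc k) = N (max (u k) (B (u k)))" for k
    unfolding u_def by simp
  have u_less: "u k < u (Suc k)" "B (u k) < u (Suc k)" for k
    using N(2)[of "max (u k) (B (u k))"] unfolding u_Suc by auto
  have u: "strict_mono u"
    unfolding strict_mono_Suc_iff using u_less by blast
  have "B c < wsup (range u)" if c: "c < wsup (range u)" for c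
  proof -
    obtain n where "c < u n" using less_wsupD[OF c] by blast
    then have "B c \<le> B (u n)" by (intro B_mono less_imp_le)
    then show ?thesis using u_less(2)[of n] less_wsup[OF u, of "Suc n"]
      by (meson le_less_trans less_trans)
  qed
  moreover have "a < wsup (range u)" using less_wsup[OF u, of 0] by (simp add: u_def)
  moreover have "wsup (range u) \<in> X"
    using club_wsup_mem[OF assms(1) u] N(1) unfolding u_Suc by blast
  ultimately show ?thesis by (intro bexI[of _ "wsup (range u)"] conjI allI impI)
qed

end

section \<open>Ordinal addition\<close>

lemma strict_mono_onto_Least:
  fixes f :: "'w::wellorder \<Rightarrow> 'w"
  assumes f: "strict_mono_on {..<b} f" "f ` {..<b} = {a..<c}" and y: "y < b"
  shows "f y = (LEAST z. a \<le> z \<and> (\<forall>y'<y. f y' < z))"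
proof -
  have fy: "f y \<in> {a..<c}" using f(2) y by blast
  show ?thesis
  proof (rule Least_equality[symmetric])
    show "a \<le> f y \<and> (\<forall>y'<y. f y' < f y)"
      using fy f(1) y by (auto intro: strict_mono_onD)
  next
    fix z assume z: "a \<le> z \<and> (\<forall>y'<y. f y' < z)"
    show "f y \<le> z"
    proof (rule ccontr)
      assume "\<not> f y \<le> z"
      then have "z \<in> f ` {..<b}" using z fy f(2) by auto
      then obtain y'' where y'': "y'' < b" "z = f y''" by auto
      show False
      proof (cases "y'' < y")
        case True then show False using z y'' by auto
      next
        case False
        then have "y = y'' \<or> y < y''" by auto
        then have "f y \<le> f y''" using f(1) y y''(1) by (auto intro: less_imp_le strict_mono_onD)
        then show False using \<open>\<not> f y \<le> z\<close> y''(2) by simp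
      qed
    qed
  qed
qed

lemma wadd_eqI:
  fixes f :: "'w::wellorder \<Rightarrow> 'w"
  assumes f: "strict_mono_on {..<b} f" "f ` {..<b} = {a..<c}" "a \<le> c"
  shows "wadd a b = c"
  unfolding wadd_def
proof (rule the_equality)
  show "a \<le> c \<and> (\<exists>f. strict_mono_on {..<b} f \<and> f ` {..<b} = {a..<c})" using f by blast
next
  fix c' assume "a \<le> c' \<and> (\<exists>g. strict_mono_on {..<b} g \<and> g ` {..<b} = {a..<c'})"
  then obtain g where g: "a \<le> c'" "strict_mono_on {..<b} g" "g ` {..<b} = {a..<c'}" by blast
  have "y < b \<longrightarrow> f y = g y" for y
  proof (induction y rule: less_induct)
    case (less y)
    show ?case
    proof
      assume y: "y < b"
      have "f y' = g y'" if "y' < y" for y'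
        using less.IH[OF that] that y by auto
      then show "f y = g y"
        unfolding strict_mono_onto_Least[OF f(1,2) y] strict_mono_onto_Least[OF g(2,3) y] by simp
    qed
  qed
  then have "f ` {..<b} = g ` {..<b}" by (intro image_cong) auto
  then have eq: "{a..<c} = {a..<c'}" using f(2) g(3) by simp
  then have "c \<notin> {a..<c'}" and "c' \<notin> {a..<c}" by auto
  then show "c' = c" using f(3) g(1) by auto
qed

lemma wadd_strict_mono_onto:
  fixes f :: "'w::wellorder \<Rightarrow> 'w"
  assumes "strict_mono f" "range f = {a..}"
  shows "wadd a d = f d"
proof (rule wadd_eqI)
  show "strict_mono_on {..<d} f" using assms(1) by (simp add: strict_mono_on_def strict_monoD)
  show "a \<le> f d" using assms(2) by auto
  show "f ` {..<d} = {a..<f d}"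
  proof (intro equalityI subsetI)
    fix x assume "x \<in> f ` {..<d}"
    then show "x \<in> {a..<f d}" using assms by (auto simp: strict_mono_less)
  next
    fix x assume x: "x \<in> {a..<f d}"
    then obtain y where "x = f y" using assms(2) by (metis atLeastLessThan_iff atLeast_iff rangeE)
    then show "x \<in> f ` {..<d}" using x assms(1) by (auto simp: strict_mono_less)
  qed
qed

definition w_omega :: "'w::wellorder" where
  "w_omega = (LEAST y. wlimit y)"

lemma wsucc_below_w_omega:
  assumes "(x::'w::wellorder) < w_omega" "x \<noteq> w0"
  shows "\<exists>y. x = wsucc y"
proof -
  have "\<not> wlimit x" using not_less_Least[of x wlimit] assms(1) unfolding w_omega_def by simp
  then show ?thesis using assms(2) unfolding wlimit_def by simp
qed

context omega1
begin

lemma wadd_w1_right: "wadd c w1 = wsucc (c::'w)"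
proof (rule wadd_eqI[where f = "\<lambda>_. c"])
  have w1: "{..<w1} = {w0::'w}" unfolding w1_def by (auto simp: less_wsucc_iff intro: antisym)
  show "strict_mono_on {..<(w1::'w)} (\<lambda>_. c)" unfolding w1 by (simp add: strict_mono_on_def)
  show "(\<lambda>_. c) ` {..<(w1::'w)} = {c..<wsucc c}"
    unfolding w1 by (auto simp: less_wsucc_iff intro: antisym)
  show "c \<le> wsucc c" using less_wsucc by (rule less_imp_le)
qed

lemma wlimit_w_omega: "wlimit (w_omega::'w)"
proof -
  have "strict_mono (\<lambda>n. (wsucc ^^ n) (w0::'w))"
    unfolding strict_mono_Suc_iff by (simp add: less_wsucc)
  then have "wlimit (wsup (range (\<lambda>n. (wsucc ^^ n) (w0::'w))))" by (rule wlimit_wsup)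
  then show ?thesis unfolding w_omega_def by (rule LeastI)
qed

lemma w0_less_w_omega: "w0 < (w_omega::'w)"
  using wlimit_w_omega w0_le[of w_omega] unfolding wlimit_def by (metis le_neq_trans)

lemma wadd_w1_left: "wadd w1 d = (if d < w_omega then wsucc d else (d::'w))"
proof -
  define g :: "'w \<Rightarrow> 'w" where "g y = (if y < w_omega then wsucc y else y)" for y
  have below: "wsucc y < w_omega" if "y < w_omega" for y :: 'w
    using wlimit_wsucc_less[OF wlimit_w_omega that] .
  have "strict_mono g"
  proof (rule strict_monoI)
    fix y y' :: 'w assume "y < y'"
    then show "g y < g y'"
      unfolding g_def using below wsucc_less_wsucc_iff by (auto simp: not_less intro: less_le_trans)
  qed
  moreover have "range g = {w1..}"
  proof (intro equalityI subsetI)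
    fix x :: 'w assume "x \<in> range g"
    then show "x \<in> {w1..}"
      unfolding g_def using w1_le_iff wsucc_neq_w0 wsucc_neq_w0[THEN not_sym] w0_less_w_omega
      by (auto simp: not_less)
  next
    fix x :: 'w assume "x \<in> {w1..}"
    then have "x \<noteq> w0" by (simp add: w1_le_iff)
    show "x \<in> range g"
    proof (cases "x < w_omega")
      case True
      then obtain y where y: "x = wsucc y" using wsucc_below_w_omega \<open>x \<noteq> w0\<close> by blast
      have "y < w_omega" using less_wsucc[of y] True unfolding y by (rule less_trans)
      then have "x = g y" unfolding g_def y by simp
      then show ?thesis by (rule range_eqI)
    next
      case False
      then have "x = g x" unfolding g_def by simp
      then show ?thesis by (rule range_eqI)
    qed
  qed
  ultimately have "wadd w1 d = g d" by (rule wadd_strict_mono_onto)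
  then show ?thesis by (simp add: g_def)
qed

lemma wadd_w1_left_neq_w0: "wadd w1 d \<noteq> (w0::'w)"
  using wadd_w1_left[of d] wsucc_neq_w0[of d] w0_less_w_omega by (auto simp: not_less)

lemma wadd_w1_left_le: "wadd w1 d \<le> wsucc (d::'w)"
  using wadd_w1_left[of d] less_wsucc by (simp add: less_imp_le)

end

section \<open>Terms in Omega-normal form\<close>

lemma T_untm [simp]: "T (untm x) = x"
  by (cases x) simp

lemma tm_cases [case_names Nil Cons]:
  obtains "x = T []" | a b xs where "x = T ((a, b) # xs)"
proof (cases x)
  case (T xs)
  then show ?thesis using that by (cases xs) auto
qed

lemma lt_nil_right [simp]: "\<not> lt x (T [])"
  by (cases x rule: tm_cases) auto

lemma lt_nil_left: "lt (T []) y \<longleftrightarrow> y \<noteq> T []"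
  by (cases y rule: tm_cases) auto

lemma lt_irrefl: "\<not> lt x x"
proof -
  have "x = y \<longrightarrow> \<not> lt x y" for y
    by (induction x y rule: lt.induct) auto
  then show ?thesis by blast
qed

lemma lt_trans: "lt x y \<Longrightarrow> lt y z \<Longrightarrow> lt x z"
proof (induction x y arbitrary: z rule: lt.induct)
  case (2 y ys)
  then show ?case by (auto simp: lt_nil_left)
next
  case (4 a b xs c d ys)
  then show ?case by (cases z rule: tm_cases) auto
qed auto

lemma lt_Cons_Cons: "lt (T (p # xs)) (T (p # ys)) \<longleftrightarrow> lt (T xs) (T ys)"
  by (cases p) (simp add: lt_irrefl)

lemma lt_append_same: "lt (T (xs @ ys)) (T (xs @ zs)) \<longleftrightarrow> lt (T ys) (T zs)"
  by (induction xs) (simp_all add: lt_Cons_Cons)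

lemma lt_append_nonempty: "ys \<noteq> [] \<Longrightarrow> lt (T xs) (T (xs @ ys))"
  using lt_append_same[of xs "[]" ys] by (simp add: lt_nil_left)

lemma lt_append_right: "lt z (T xs) \<Longrightarrow> lt z (T (xs @ ys))"
proof (induction xs arbitrary: z)
  case (Cons p xs)
  then show ?case by (cases z rule: tm_cases; cases p) (auto simp: lt_nil_left)
qed simp

lemma lt_append_cases:
  assumes "lt (T zs) (T (xs @ ys))"
  shows "lt (T zs) (T xs) \<or> (\<exists>rest. zs = xs @ rest \<and> lt (T rest) (T ys))"
  using assms
proof (induction xs arbitrary: zs)
  case (Cons p xs)
  show ?case
  proof (cases zs)
    case (Cons q zs')
    then show ?thesis using Cons.prems Cons.IH[of zs'] by (cases p; cases q) auto
  qed (simp add: lt_nil_left)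
qed simp

definition Omega_multiple :: "'w::wellorder tm \<Rightarrow> bool" where
  "Omega_multiple x \<longleftrightarrow> (\<forall>(e, c) \<in> set (untm x). e \<noteq> T [])"

lemma Omega_multiple_Cons:
  "Omega_multiple (T ((a, b) # xs)) \<longleftrightarrow> a \<noteq> T [] \<and> Omega_multiple (T xs)"
  by (simp add: Omega_multiple_def)

lemma lt_snoc_zero:
  "lt (T xs) (T ys) \<Longrightarrow> Omega_multiple (T ys) \<Longrightarrow> lt (T (xs @ [(T [], d)])) (T ys)"
proof (induction xs arbitrary: ys)
  case Nil
  then show ?case by (cases ys) (auto simp: Omega_multiple_def lt_nil_left)
next
  case (Cons p xs)
  then obtain q ys' where "ys = q # ys'" by (cases ys) auto
  then show ?case using Cons by (cases p; cases q) (auto simp: Omega_multiple_Cons)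
qed

lemma nf_Cons_iff:
  "nf (T ((a, b) # xs)) \<longleftrightarrow> nf a \<and> b \<noteq> w0 \<and> nf (T xs) \<and> (\<forall>c d r. xs = (c, d) # r \<longrightarrow> lt c a)"
  by (auto split: list.splits)

lemma nf_tail: "nf (T (p # xs)) \<Longrightarrow> nf (T xs)"
  by (cases p) auto

lemma nf_snoc:
  assumes "nf (T xs)" "xs \<noteq> [] \<Longrightarrow> lt e (fst (last xs))" "nf e" "c \<noteq> w0"
  shows "nf (T (xs @ [(e, c)]))"
  using assms
proof (induction xs)
  case (Cons p xs)
  then show ?case by (cases p; cases xs) (auto split: list.splits)
qed simp

lemma nf_change_last: "nf (T (xs @ [(e, c)])) \<Longrightarrow> c' \<noteq> w0 \<Longrightarrow> nf (T (xs @ [(e, c')]))"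
proof (induction xs)
  case (Cons p xs)
  then show ?case by (cases p; cases xs) (auto split: list.splits)
qed simp

lemma nf_mem: "nf (T xs) \<Longrightarrow> (e, c) \<in> set xs \<Longrightarrow> nf e \<and> c \<noteq> w0"
proof (induction xs)
  case (Cons p xs)
  then show ?case by (cases p) (auto dest: nf_tail)
qed simp

lemma nf_zero_last: "nf (T (xs @ (T [], c) # r)) \<Longrightarrow> r = []"
proof (induction xs)
  case Nil
  then show ?case by (cases r) auto
next
  case (Cons p xs)
  then show ?case by (cases p) (auto dest: nf_tail)
qed

lemma finite_Cs: "finite (Cs x)"
  by (induction x rule: Cs.induct) auto

lemma w0_mem_Cs: "w0 \<in> Cs x"
  by (induction x rule: Cs.induct) auto

lemma Cs_append: "Cs (T (xs @ ys)) = Cs (T xs) \<union> Cs (T ys)"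
  by (induction xs) (auto simp: w0_mem_Cs)

lemma star_less_iff: "star x < \<theta> \<longleftrightarrow> (\<forall>c\<in>Cs x. c < \<theta>)"
  unfolding star_def using finite_Cs w0_mem_Cs by (subst Max_less_iff) auto

lemma star_le_iff: "star x \<le> \<theta> \<longleftrightarrow> (\<forall>c\<in>Cs x. c \<le> \<theta>)"
  unfolding star_def using finite_Cs w0_mem_Cs by (subst Max_le_iff) auto

lemma Cs_le_star: "c \<in> Cs x \<Longrightarrow> c \<le> star x"
  unfolding star_def by (rule Max_ge[OF finite_Cs])

lemma star_mono: "Cs y \<subseteq> Cs x \<Longrightarrow> star y \<le> star x"
  using star_le_iff Cs_le_star by blast

lemma Cs_cw: "Cs (cw c) = {w0, c}"
  unfolding cw_def by auto

lemma star_cw: "star (cw c) = c"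
  unfolding star_def Cs_cw by (simp add: max_def)

lemma nf_cw: "nf (cw c)"
  unfolding cw_def by simp

lemma to_w_cw: "to_w (cw c) = c"
  unfolding cw_def to_w_def by simp

lemma star_neq_w0:
  assumes "nf x" "x \<noteq> T []"
  shows "star x \<noteq> w0"
proof (cases x rule: tm_cases)
  case (Cons a b xs)
  then have "b \<le> star x" "b \<noteq> w0" using assms(1) by (auto intro: Cs_le_star)
  then show ?thesis by (auto simp: le_less)
qed (use assms(2) in simp)

lemma lt_cw:
  assumes "Omega_multiple (T xs)" "xs \<noteq> []"
  shows "lt (cw c) (T (xs @ ys))"
  using assms by (cases xs) (auto simp: cw_def Omega_multiple_def lt_nil_left)

lemma tadd_w0 [simp]: "tadd x w0 = x"
  by (cases x) simp

lemma tadd_snoc: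
  "d \<noteq> w0 \<Longrightarrow> xs = [] \<or> fst (last xs) \<noteq> T [] \<Longrightarrow> tadd (T xs) d = T (xs @ [(T [], d)])"
  by auto

lemma tadd_last_zero:
  "d \<noteq> w0 \<Longrightarrow> tadd (T (xs @ [(T [], c)])) d = T (xs @ [(T [], wadd c d)])"
  by simp

declare tadd.simps [simp del]

lemma tadd_Omega_multiple:
  assumes "Omega_multiple x"
  shows "tadd x \<gamma> = (if \<gamma> = w0 then x else T (untm x @ [(T [], \<gamma>)]))"
proof -
  have "fst (last (untm x)) \<noteq> T []" if "untm x \<noteq> []"
    using assms last_in_set[OF that] unfolding Omega_multiple_def by (cases "last (untm x)") auto
  then show ?thesis using tadd_snoc[of \<gamma> "untm x"] by (cases "\<gamma> = w0") auto
qed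

lemma lt_tadd:
  assumes "lt x y" "Omega_multiple y"
  shows "lt (tadd x d) y"
proof (cases "d = w0")
  case d: False
  obtain xs where x: "x = T xs" by (cases x)
  show ?thesis
  proof (cases "xs \<noteq> [] \<and> fst (last xs) = T []")
    case True
    then obtain xs' c where xs: "xs = xs' @ [(T [], c)]" by (cases xs rule: rev_cases) auto
    have "lt (T xs') y" using lt_append_nonempty[of "[(T [], c)]" xs'] assms(1) x xs lt_trans by blast
    then show ?thesis using lt_snoc_zero[of xs' "untm y"] assms(2) d x xs by (simp add: tadd_last_zero)
  next
    case False
    then show ?thesis using lt_snoc_zero[of xs "untm y"] assms d x by (simp add: tadd_snoc)
  qed
qed (use assms in simp)

lemma Cs_tadd_subset:
  "Cs (tadd (T xs) d) \<subseteq> Cs (T xs) \<union> {d} \<union> {wadd c d | c. (T [], c) \<in> set xs}"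
proof (cases "d \<noteq> w0 \<and> xs \<noteq> [] \<and> fst (last xs) = T []")
  case True
  then obtain xs' c where xs: "xs = xs' @ [(T [], c)]" by (cases xs rule: rev_cases) auto
  then show ?thesis using True by (auto simp: tadd_last_zero Cs_append w0_mem_Cs)
next
  case False
  then show ?thesis by (cases "d = w0") (auto simp: tadd_snoc Cs_append w0_mem_Cs)
qed

lemma tadd_ends_zero:
  assumes "d \<noteq> w0"
  shows "\<exists>xs c. tadd z d = T (xs @ [(T [], c)])"
proof -
  obtain zs where zs: "z = T zs" by (cases z)
  show ?thesis
  proof (cases "zs \<noteq> [] \<and> fst (last zs) = T []")
    case True
    then obtain zs' c where "zs = zs' @ [(T [], c)]" by (cases zs rule: rev_cases) auto
    then show ?thesis using assms zs by (auto simp: tadd_last_zero)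
  next
    case False
    then show ?thesis using assms zs by (auto simp: tadd_snoc)
  qed
qed

lemma nf_tadd:
  assumes "nf (T xs)" "d \<noteq> w0" "\<And>c. (T [], c) \<in> set xs \<Longrightarrow> wadd c d \<noteq> w0"
  shows "nf (tadd (T xs) d)"
proof (cases "xs \<noteq> [] \<and> fst (last xs) = T []")
  case True
  then obtain xs' c where xs: "xs = xs' @ [(T [], c)]" by (cases xs rule: rev_cases) auto
  then show ?thesis using assms nf_change_last[of xs' "T []" c] by (simp add: tadd_last_zero)
next
  case False
  then show ?thesis using assms by (auto simp: tadd_snoc lt_nil_left intro!: nf_snoc)
qed

lemma nf_tadd_Omega_multiple: "nf x \<Longrightarrow> Omega_multiple x \<Longrightarrow> nf (tadd x \<gamma>)"
  using nf_tadd[of "untm x" \<gamma>] by (cases "\<gamma> = w0") (auto simp: Omega_multiple_def)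

lemma Cs_tadd_Omega_multiple: "Omega_multiple x \<Longrightarrow> Cs (tadd x \<gamma>) = Cs x \<union> {\<gamma>}"
  using Cs_append[of "untm x" "[(T [], \<gamma>)]"] by (auto simp: tadd_Omega_multiple w0_mem_Cs)

lemma star_le_star_tadd: "Omega_multiple x \<Longrightarrow> star x \<le> star (tadd x \<gamma>)"
  by (rule star_mono) (auto simp: Cs_tadd_Omega_multiple)

lemma lt_tadd_tadd: "Omega_multiple x \<Longrightarrow> \<gamma> < \<beta> \<Longrightarrow> lt (tadd x \<gamma>) (tadd x \<beta>)"
  using lt_append_nonempty[of "[(T [], \<beta>)]" "untm x"] lt_append_same[of "untm x"]
  by (auto simp: tadd_Omega_multiple)

lemma lt_tadd_self: "Omega_multiple x \<Longrightarrow> d \<noteq> w0 \<Longrightarrow> lt x (tadd x d)"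
  using lt_append_nonempty[of "[(T [], d)]" "untm x"] by (simp add: tadd_Omega_multiple)

lemma lt_cw_tadd: "Omega_multiple x \<Longrightarrow> x \<noteq> T [] \<Longrightarrow> lt (cw c) (tadd x \<beta>)"
  using lt_cw[of "untm x" c "[]"] lt_cw[of "untm x" c "[(T [], \<beta>)]"]
  by (cases x) (simp add: tadd_Omega_multiple)

lemma lt_imp_lt_tadd: "Omega_multiple x \<Longrightarrow> lt z x \<Longrightarrow> lt z (tadd x \<beta>)"
  using lt_append_right[of z "untm x"] by (simp add: tadd_Omega_multiple)

lemma lt_tadd_cases:
  assumes x: "Omega_multiple x" and z: "nf z" "lt z (tadd x \<beta>)" "\<not> lt z x"
  shows "\<exists>\<gamma><\<beta>. z = tadd x \<gamma>"
proof -
  have \<beta>: "\<beta> \<noteq> w0" using z by auto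
  obtain zs where zs: "z = T zs" by (cases z)
  have "lt (T zs) (T (untm x @ [(T [], \<beta>)]))" using z(2) x \<beta> zs by (simp add: tadd_Omega_multiple)
  then obtain rest where rest: "zs = untm x @ rest" "lt (T rest) (T [(T [], \<beta>)])"
    using lt_append_cases z(3) zs by fastforce
  show ?thesis
  proof (cases rest)
    case Nil
    then show ?thesis using rest zs \<beta> by (intro exI[of _ w0]) (auto simp: le_neq_trans)
  next
    case (Cons q r)
    then obtain \<gamma> where q: "q = (T [], \<gamma>)" "\<gamma> < \<beta>" using rest(2) by (cases q) auto
    then have "r = []" using z(1) zs rest(1) Cons nf_zero_last by blast
    moreover have "\<gamma> \<noteq> w0" using z(1) zs rest(1) Cons q nf_mem[of zs "T []" \<gamma>] by auto
    ultimately show ?thesis using zs rest(1) Cons q x by (auto simp: tadd_Omega_multiple)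
  qed
qed

context omega1
begin

lemma tadd_tadd_w1:
  assumes "Omega_multiple (x::'w tm)"
  shows "tadd (tadd x \<gamma>) w1 = tadd x (wsucc \<gamma>)"
proof (cases "\<gamma> = w0")
  case True
  then show ?thesis by (simp add: w1_def)
next
  case False
  have "w1 \<noteq> (w0::'w)" using w0_less_w1 by simp
  then show ?thesis using assms False wsucc_neq_w0
    by (simp add: tadd_Omega_multiple tadd_last_zero wadd_w1_right)
qed

lemma tadd_eq_tadd_w1:
  assumes x: "Omega_multiple (x::'w tm)" and z: "nf z" and eq: "tadd x \<beta> = tadd z w1"
  shows "\<exists>\<gamma>. \<beta> = wsucc \<gamma> \<and> z = tadd x \<gamma>"
proof -
  have w1: "w1 \<noteq> (w0::'w)" using w0_less_w1 by simp
  have not_zero_last: "untm x \<noteq> xs @ [(T [], c)]" for xs c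
    using x by (auto simp: Omega_multiple_def)
  have \<beta>: "\<beta> \<noteq> w0"
  proof
    assume "\<beta> = w0"
    moreover obtain xs c where "tadd z w1 = T (xs @ [(T [], c)])" using tadd_ends_zero w1 by blast
    ultimately show False using eq not_zero_last[of xs c] by simp
  qed
  then have x\<beta>: "tadd x \<beta> = T (untm x @ [(T [], \<beta>)])" using x by (simp add: tadd_Omega_multiple)
  obtain zs where zs: "z = T zs" by (cases z)
  show ?thesis
  proof (cases "zs \<noteq> [] \<and> fst (last zs) = T []")
    case True
    then obtain zs' c where zs': "zs = zs' @ [(T [], c)]" by (cases zs rule: rev_cases) auto
    then have "untm x = zs' \<and> \<beta> = wsucc c"
      using eq x\<beta> zs w1 by (simp add: tadd_last_zero wadd_w1_right)
    moreover have "c \<noteq> w0" using z zs zs' nf_mem[of zs "T []" c] by simp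
    ultimately show ?thesis using zs zs' x by (auto simp: tadd_Omega_multiple)
  next
    case False
    then have "untm x = zs \<and> \<beta> = w1" using eq x\<beta> zs w1 by (simp add: tadd_snoc)
    then show ?thesis using zs by (auto simp: w1_def)
  qed
qed

lemma tsucc_tadd_iff:
  assumes "nf x" "Omega_multiple (x::'w tm)"
  shows "tsucc (tadd x \<beta>) \<longleftrightarrow> (\<exists>\<gamma>. \<beta> = wsucc \<gamma>)"
  using assms tadd_eq_tadd_w1 tadd_tadd_w1 nf_tadd_Omega_multiple unfolding tsucc_def by metis

lemma tpred_tadd_wsucc:
  assumes "nf x" "Omega_multiple (x::'w tm)"
  shows "tpred (tadd x (wsucc \<gamma>)) = tadd x \<gamma>"
  unfolding tpred_def
proof (rule the_equality)
  show "nf (tadd x \<gamma>) \<and> tadd x (wsucc \<gamma>) = tadd (tadd x \<gamma>) w1"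
    using assms by (simp add: nf_tadd_Omega_multiple tadd_tadd_w1)
  show "z = tadd x \<gamma>" if "nf z \<and> tadd x (wsucc \<gamma>) = tadd z w1" for z
    using tadd_eq_tadd_w1[of x z "wsucc \<gamma>"] assms that by (auto simp: wsucc_inject)
qed

end

section \<open>The collapsing function Theta\<close>

lemma acc_tmrel_Nil: "T [] \<in> Wellfounded.acc tmrel"
  by (rule accI) (simp add: tmrel_def)

lemma acc_tmrel_step:
  assumes IH_exp: "\<And>c e ys. (c, a) \<in> tmrel \<Longrightarrow> nf (T ((c, e) # ys)) \<Longrightarrow>
      T ((c, e) # ys) \<in> Wellfounded.acc tmrel"
    and IH_coeff: "\<And>e ys. e < b \<Longrightarrow> nf (T ((a, e) # ys)) \<Longrightarrow>
      T ((a, e) # ys) \<in> Wellfounded.acc tmrel"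
    and tail: "T ws \<in> Wellfounded.acc tmrel"
  shows "nf (T ((a, b) # ws)) \<Longrightarrow> T ((a, b) # ws) \<in> Wellfounded.acc tmrel"
  using tail
proof (induction "T ws" arbitrary: ws rule: acc.induct)
  case (accI ws)
  show ?case
  proof (rule Wellfounded.accI)
    fix y assume "(y, T ((a, b) # ws)) \<in> tmrel"
    then have y: "nf y" "lt y (T ((a, b) # ws))" by (auto simp: tmrel_def)
    show "y \<in> Wellfounded.acc tmrel"
    proof (cases y rule: tm_cases)
      case Nil
      then show ?thesis by (simp add: acc_tmrel_Nil)
    next
      case (Cons c e zs)
      then consider "lt c a" | "c = a" "e < b" | "c = a" "e = b" "lt (T zs) (T ws)"
        using y(2) by auto
      then show ?thesis
      proof cases
        case 1
        then show ?thesis using IH_exp y(1) accI.prems Cons by (simp add: tmrel_def)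
      next
        case 2
        then show ?thesis using IH_coeff y(1) Cons by simp
      next
        case 3
        then have "(T zs, T ws) \<in> tmrel"
          using y(1) accI.prems Cons by (auto simp: tmrel_def dest: nf_tail)
        then show ?thesis using accI.hyps(2) y(1) Cons 3 by simp
      qed
    qed
  qed
qed

lemma acc_tmrel_Cons:
  "a \<in> Wellfounded.acc tmrel \<Longrightarrow> nf (T ((a, b) # ys)) \<Longrightarrow> T ((a, b) # ys) \<in> Wellfounded.acc tmrel"
proof (induction a arbitrary: b ys rule: acc.induct)
  case (accI a)
  show ?case using accI.prems
  proof (induction b arbitrary: ys rule: less_induct)
    case (less b)
    have tail: "T ys \<in> Wellfounded.acc tmrel"
    proof (cases ys)
      case Nil
      then show ?thesis by (simp add: acc_tmrel_Nil)
    next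
      case (Cons q ys')
      then show ?thesis using accI.IH less.prems by (cases q) (auto simp: tmrel_def)
    qed
    show ?case
    proof (rule acc_tmrel_step[OF _ _ tail less.prems])
      show "T ((c, e) # ys) \<in> Wellfounded.acc tmrel"
        if "(c, a) \<in> tmrel" "nf (T ((c, e) # ys))" for c e ys
        using that by (rule accI.IH)
      show "T ((a, e) # ys) \<in> Wellfounded.acc tmrel"
        if "e < b" "nf (T ((a, e) # ys))" for e ys
        using that by (rule less.IH)
    qed
  qed
qed

lemma wf_tmrel: "wf (tmrel :: ('w::wellorder tm \<times> 'w tm) set)"
  unfolding wf_iff_acc
proof
  fix x :: "'w tm"
  show "x \<in> Wellfounded.acc tmrel"
  proof (induction x rule: measure_induct_rule[where f = size])
    case (less x)
    show ?case
    proof (cases "nf x")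
      case False
      show ?thesis
      proof (rule Wellfounded.accI)
        show "y \<in> Wellfounded.acc tmrel" if "(y, x) \<in> tmrel" for y
          using that False by (simp add: tmrel_def)
      qed
    next
      case True
      then show ?thesis
      proof (cases x rule: tm_cases)
        case (Cons a b ys)
        then have "a \<in> Wellfounded.acc tmrel" using less.IH by simp
        then show ?thesis using True Cons by (simp add: acc_tmrel_Cons)
      qed (simp add: acc_tmrel_Nil)
    qed
  qed
qed

lemma Theta_unfold:
  assumes "nf x"
  shows "Theta X x = (LEAST \<theta>. \<theta> \<in> X \<and> star x < \<theta> \<and>
      (\<forall>z. nf z \<and> lt z x \<and> star z < \<theta> \<longrightarrow> Theta X z < \<theta>))"
  using assms unfolding Theta_def
  by (subst wfrec[OF wf_tmrel]) (simp add: cut_def tmrel_def cong: conj_cong)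

instance tm :: (countable) countable
  by countable_datatype

lemma set_tm_subset_Cs: "set_tm z \<subseteq> Cs z"
  by (induction z rule: Cs.induct) auto

context omega1
begin

lemma countable_star_le: "countable {z :: 'w tm. star z \<le> \<theta>}"
proof -
  have "{..\<theta>} = insert \<theta> {..<\<theta>}" by auto
  then have "countable {..\<theta>}" using omega1_like unfolding omega1_like_def by simp
  then obtain e :: "'w \<Rightarrow> nat" where e: "inj_on e {..\<theta>}" by (auto simp: countable_def)
  let ?A = "{z :: 'w tm. set_tm z \<subseteq> {..\<theta>}}"
  have "inj_on (map_tm e) ?A"
  proof (rule inj_onI)
    fix x y assume "x \<in> ?A" "y \<in> ?A" "map_tm e x = map_tm e y"
    then show "x = y" using e by (intro tm.inj_map_strong[of x y e e]) (auto dest: inj_onD)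
  qed
  moreover have "countable (map_tm e ` ?A)" by (rule countableI_type)
  ultimately have "countable ?A" by (rule countable_image_inj_on[rotated])
  moreover have "{z. star z \<le> \<theta>} \<subseteq> ?A"
  proof
    fix z assume "z \<in> {z. star z \<le> \<theta>}"
    then have "\<forall>c\<in>Cs z. c \<le> \<theta>" by (simp add: star_le_iff)
    then show "z \<in> ?A" using set_tm_subset_Cs[of z] by auto
  qed
  ultimately show ?thesis by (rule countable_subset[rotated])
qed

end

locale omega1_club = omega1 W for W :: "'w::wellorder itself" +
  fixes X :: "'w set"
  assumes club: "club X"
begin

lemma Theta_characterization:
  assumes x: "nf (x::'w tm)"
  shows "Theta X x \<in> X \<and> star x < Theta X x \<and>
    (\<forall>z. nf z \<and> lt z x \<and> star z < Theta X x \<longrightarrow> Theta X z < Theta X x)"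
proof -
  define B where "B c = (LEAST h. \<forall>z. star z \<le> c \<longrightarrow> Theta X z < h)" for c
  have B: "\<forall>z. star z \<le> c \<longrightarrow> Theta X z < B c" for c
  proof -
    have "countable (Theta X ` {z. star z \<le> c})" by (rule countable_image[OF countable_star_le])
    then obtain h where "\<forall>a\<in>Theta X ` {z. star z \<le> c}. a < h"
      using countable_bounded by blast
    then have "\<forall>z. star z \<le> c \<longrightarrow> Theta X z < h" by auto
    then show ?thesis unfolding B_def by (rule LeastI)
  qed
  have B_mono: "B c \<le> B c'" if "c \<le> c'" for c c'
  proof -
    have "\<forall>z. star z \<le> c \<longrightarrow> Theta X z < B c'" using B[of c'] that by auto
    then show ?thesis unfolding B_def[of c] by (rule Least_le)
  qed
  \<comment> \<open>B c bounds Theta on the countably many terms with coefficients at most c, so a closure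
    point of B in X above x* meets the defining condition of Theta x.\<close>
  obtain s where s: "s \<in> X" "star x < s" "\<forall>c<s. B c < s"
    using club_closure_point[OF club, where B = B and a = "star x"] B_mono by blast
  have "Theta X z < s" if "star z < s" for z
  proof -
    have "Theta X z < B (star z)" using B by simp
    also have "\<dots> < s" using s(3) that by simp
    finally show ?thesis .
  qed
  then have "\<exists>\<theta>. \<theta> \<in> X \<and> star x < \<theta> \<and> (\<forall>z. nf z \<and> lt z x \<and> star z < \<theta> \<longrightarrow> Theta X z < \<theta>)"
    using s(1,2) by blast
  then show ?thesis unfolding Theta_unfold[OF x] by (rule LeastI_ex)
qed

lemma Theta_mem: "nf x \<Longrightarrow> Theta X x \<in> X"
  using Theta_characterization by blast

lemma star_less_Theta: "nf x \<Longrightarrow> star x < Theta X x"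
  using Theta_characterization by blast

lemma Theta_less_Theta: "nf x \<Longrightarrow> nf z \<Longrightarrow> lt z x \<Longrightarrow> star z < Theta X x \<Longrightarrow> Theta X z < Theta X x"
  using Theta_characterization by blast

lemma Theta_le:
  assumes "nf x" "\<theta> \<in> X" "star x < \<theta>"
    and "\<And>z. nf z \<Longrightarrow> lt z x \<Longrightarrow> star z < \<theta> \<Longrightarrow> Theta X z < \<theta>"
  shows "Theta X x \<le> \<theta>"
  unfolding Theta_unfold[OF assms(1)] using assms(2-4) by (intro Least_le) blast

lemma wsucc_less_Theta:
  assumes "nf y" "lt (cw c) y" "c < Theta X y"
  shows "wsucc c < Theta X y"
proof -
  have "c < Theta X (cw c)" using star_less_Theta[OF nf_cw] by (simp add: star_cw)
  moreover have "Theta X (cw c) < Theta X y"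
    using Theta_less_Theta[OF assms(1) nf_cw assms(2)] assms(3) by (simp add: star_cw)
  ultimately show ?thesis using wsucc_le[of c "Theta X (cw c)"] by simp
qed

end

section \<open>Fundamental sequences\<close>

text \<open>tau x is a countable limit \<tau>: the other nonzero values of tau are 1 and Omega.\<close>
definition limit_cof :: "'w::wellorder tm \<Rightarrow> 'w \<Rightarrow> bool" where
  "limit_cof x \<tau> \<longleftrightarrow> nf x \<and> tau x = cw \<tau> \<and> w1 < \<tau>"

lemma fs_limit [simp]: "wlimit b \<Longrightarrow> fs (T [(a, b)]) \<theta> = mono a \<theta>"
  by simp

declare fs.simps(2) [simp del]

lemma fs_append: "fs (T (xs @ [p])) \<theta> = T (xs @ untm (fs (T [p]) \<theta>))"
proof (induction xs)
  case (Cons q xs)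
  then show ?case by (cases q; cases "xs @ [p]") auto
qed simp

lemma Cs_mono: "Cs (mono a c) \<subseteq> Cs a \<union> {c, w0}"
  by (auto simp: mono_def)

lemma nf_mono: "nf a \<Longrightarrow> nf (mono a c)"
  by (simp add: mono_def)

context omega1
begin

lemma fs_wsucc:
  fixes a :: "'w tm"
  assumes "a \<noteq> T []" "\<not> tsucc a"
  shows "fs (T [(a, wsucc c)]) \<theta> = T (untm (mono a c) @ [(fs a \<theta>, w1)])"
proof -
  have "\<not> wlimit (wsucc c)" by (auto simp: wlimit_def)
  then show ?thesis
    using assms by (simp add: fs.simps(2) Let_def mono_def wsucc_eq_w1_iff wpred_wsucc)
qed

lemma limit_cof_induct [consumes 1, case_names limit succ cons]:
  fixes x :: "'w tm"
  assumes "limit_cof x \<tau>"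
    and limit: "\<And>a. nf a \<Longrightarrow> wlimit \<tau> \<Longrightarrow> P (T [(a, \<tau>)])"
    and succ: "\<And>a c. limit_cof a \<tau> \<Longrightarrow> P a \<Longrightarrow> a \<noteq> T [] \<Longrightarrow> \<not> tsucc a \<Longrightarrow>
      nf (T [(a, wsucc c)]) \<Longrightarrow> P (T [(a, wsucc c)])"
    and cons: "\<And>a b y ys. limit_cof (T (y # ys)) \<tau> \<Longrightarrow> P (T (y # ys)) \<Longrightarrow>
      nf (T ((a, b) # y # ys)) \<Longrightarrow> P (T ((a, b) # y # ys))"
  shows "P x"
  using assms(1)
proof (induction x rule: tau.induct)
  case 1
  then have "w1 < \<tau>" "cw \<tau> = T []" by (auto simp: limit_cof_def)
  then show ?case using w0_less_w1 by (auto simp: cw_def split: if_splits)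
next
  case (2 a b)
  then have x: "nf (T [(a, b)])" "tau (T [(a, b)]) = cw \<tau>" "w1 < \<tau>"
    by (auto simp: limit_cof_def)
  have \<tau>: "\<tau> \<noteq> w0" using x(3) w0_less_w1 by auto
  show ?case
  proof (cases "wlimit b")
    case True
    then have "b = \<tau>" using x(2) \<tau> by (auto simp: cw_def wlimit_def split: if_splits)
    then show ?thesis using limit x(1) True by simp
  next
    case False
    then obtain c where c: "b = wsucc c" using x(1) by (auto simp: wlimit_def)
    have "a \<noteq> T []" using x(2,3) False \<tau> by (auto simp: one_def cw_def)
    moreover have "\<not> tsucc a" using x(2) False \<tau> calculation by (auto simp: Omega_def cw_def one_def)
    moreover have "limit_cof a \<tau>" using x False calculation by (simp add: limit_cof_def)
    ultimately show ?thesis using succ 2 x(1) c False by simp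
  qed
next
  case (3 a b y ys)
  then have "limit_cof (T (y # ys)) \<tau>" by (auto simp: limit_cof_def dest: nf_tail)
  then show ?case using cons 3 by (simp add: limit_cof_def)
qed

lemma fs_neq_Nil:
  fixes x :: "'w tm"
  assumes "limit_cof x \<tau>" "\<theta> \<noteq> w0"
  shows "fs x \<theta> \<noteq> T []"
  using assms(1) by (cases rule: limit_cof_induct) (use assms(2) in \<open>auto simp: fs_wsucc mono_def\<close>)

lemma lt_fs:
  fixes x :: "'w tm"
  assumes "limit_cof x \<tau>" "\<theta> < \<tau>"
  shows "lt (fs x \<theta>) x"
  using assms(1)
proof (induction rule: limit_cof_induct)
  case (limit a)
  then show ?case using assms(2) by (auto simp: mono_def lt_irrefl)
next
  case (succ a c)
  then show ?case by (auto simp: fs_wsucc mono_def less_wsucc)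
next
  case (cons a b y ys)
  then show ?case by (simp add: lt_Cons_Cons)
qed

lemma fs_head:
  fixes x :: "'w tm"
  assumes "limit_cof x \<tau>" "\<theta> < \<tau>"
    and "fs x \<theta> = T ((c, e) # r)" "x = T ((a, b) # r')"
  shows "c = a \<or> lt c a"
  using assms(1,3,4)
proof (induction arbitrary: a b r' rule: limit_cof_induct)
  case (succ a' c')
  then show ?case using lt_fs[OF succ(1) assms(2)]
    by (cases "c' = w0") (auto simp: fs_wsucc mono_def)
qed (auto simp: mono_def split: if_splits)

lemma nf_fs:
  fixes x :: "'w tm"
  assumes "limit_cof x \<tau>" "\<theta> < \<tau>"
  shows "nf (fs x \<theta>)"
  using assms(1)
proof (induction rule: limit_cof_induct)
  case (limit a)
  then show ?case by (simp add: nf_mono)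
next
  case (succ a c)
  then show ?case using lt_fs[OF succ(1) assms(2)] w0_less_w1
    by (auto simp: fs_wsucc mono_def)
next
  case (cons a b y ys)
  have "lt c a" if "untm (fs (T (y # ys)) \<theta>) = (c, e) # r" for c e r
  proof -
    obtain a' b' where y: "y = (a', b')" by (cases y)
    have "fs (T (y # ys)) \<theta> = T ((c, e) # r)" using that by (metis T_untm)
    then have "c = a' \<or> lt c a'" using fs_head[OF cons.hyps(1) assms(2)] y by blast
    moreover have "lt a' a" using cons.hyps(2) y by simp
    ultimately show ?thesis using lt_trans by blast
  qed
  then show ?case using cons.IH cons.hyps(2) by (auto simp: nf_Cons_iff split: list.split)
qed

lemma lt_fs_fs:
  fixes x :: "'w tm"
  assumes "limit_cof x \<tau>" "\<theta> < \<theta>'"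
  shows "lt (fs x \<theta>) (fs x \<theta>')"
  using assms(1)
proof (induction rule: limit_cof_induct)
  case (limit a)
  then show ?case using assms(2) by (auto simp: mono_def lt_nil_left)
next
  case (succ a c)
  then show ?case by (simp add: fs_wsucc lt_append_same)
next
  case (cons a b y ys)
  then show ?case by (simp add: lt_Cons_Cons)
qed

lemma Cs_fs:
  fixes x :: "'w tm"
  assumes "limit_cof x \<tau>"
  shows "Cs (fs x \<theta>) \<subseteq> {..star x} \<union> {\<theta>}"
  using assms
proof (induction rule: limit_cof_induct)
  case (limit a)
  have "Cs a \<union> {w0} \<subseteq> {..star (T [(a, \<tau>)])}" by (auto intro: Cs_le_star)
  then show ?case using Cs_mono[of a \<theta>] limit.hyps(2) by auto
next
  case (succ a c)
  let ?S = "star (T [(a, wsucc c)])"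
  have "wsucc c \<le> ?S" by (rule Cs_le_star) simp
  then have small: "c \<le> ?S" "w1 \<le> ?S"
    using less_wsucc[of c] w1_le_iff[of "wsucc c"] wsucc_neq_w0[of c] by auto
  have a: "star a \<le> ?S" by (rule star_mono) auto
  show ?case
  proof
    fix x assume "x \<in> Cs (fs (T [(a, wsucc c)]) \<theta>)"
    then have "x \<in> Cs (mono a c) \<or> x \<in> Cs (fs a \<theta>) \<or> x = w1 \<or> x = w0"
      using succ.hyps by (auto simp: fs_wsucc Cs_append)
    then show "x \<in> {..?S} \<union> {\<theta>}"
      using Cs_mono[of a c] succ.IH small a Cs_le_star[of x a] by (auto intro: order_trans)
  qed
next
  case (cons a b y ys)
  let ?S = "star (T ((a, b) # y # ys))"
  have tail: "star (T (y # ys)) \<le> ?S" by (rule star_mono) auto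
  show ?case
  proof
    fix x assume "x \<in> Cs (fs (T ((a, b) # y # ys)) \<theta>)"
    then have "x \<in> Cs a \<or> x = b \<or> x \<in> Cs (fs (T (y # ys)) \<theta>)" by auto
    then show "x \<in> {..?S} \<union> {\<theta>}"
      using cons.IH tail by (auto intro: Cs_le_star order_trans)
  qed
qed

lemma mem_Cs_fs:
  fixes x :: "'w tm"
  assumes "limit_cof x \<tau>"
  shows "\<theta> \<in> Cs (fs x \<theta>)"
  using assms
  by (induction rule: limit_cof_induct) (auto simp: mono_def fs_wsucc Cs_append w0_mem_Cs)

lemma fs_zero_exponent:
  fixes x :: "'w tm"
  assumes "limit_cof x \<tau>" "Omega_multiple x" "(T [], c) \<in> set (untm (fs x \<theta>))"
  shows "\<theta> = w0 \<and> c = w1"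
  using assms
proof (induction rule: limit_cof_induct)
  case (succ a c')
  have "fs a \<theta> \<noteq> T []" if "\<theta> \<noteq> w0" using fs_neq_Nil[OF succ.hyps(1) that] .
  then show ?case using succ.prems succ.hyps by (auto simp: fs_wsucc mono_def split: if_splits)
qed (auto simp: Omega_multiple_Cons Omega_multiple_def mono_def split: if_splits)

lemma Omega_multiple_fs:
  fixes \<alpha> :: "'w tm"
  assumes "limit_cof \<alpha> \<tau>" "Omega_multiple \<alpha>" "\<theta> \<noteq> w0"
  shows "Omega_multiple (fs \<alpha> \<theta>)"
  using fs_zero_exponent[OF assms(1,2)] assms(3) unfolding Omega_multiple_def by fastforce

lemma tau_mem_Cs:
  fixes x :: "'w tm"
  assumes "limit_cof x \<tau>"
  shows "\<tau> \<in> Cs x"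
  using assms by (induction rule: limit_cof_induct) auto

lemma fs_cofinal_limit:
  fixes a z :: "'w tm"
  assumes "wlimit \<tau>" "lt z (T [(a, \<tau>)])"
  shows "\<exists>\<theta><\<tau>. lt z (fs (T [(a, \<tau>)]) \<theta>)"
proof -
  have w1: "w1 < \<tau>" using assms(1) w0_less_w1 unfolding w1_def
    by (intro wlimit_wsucc_less) (auto simp: wlimit_def le_neq_trans)
  show ?thesis
  proof (cases z rule: tm_cases)
    case Nil
    then have "lt z (fs (T [(a, \<tau>)]) w1)" using w0_less_w1 assms(1) by (auto simp: mono_def lt_nil_left)
    then show ?thesis using w1 by blast
  next
    case (Cons c e zs)
    then consider "lt c a" | "c = a" "e < \<tau>" using assms(2) by auto
    then show ?thesis
    proof cases
      case 1
      then have "lt z (fs (T [(a, \<tau>)]) w1)" using Cons w0_less_w1 assms(1) by (auto simp: mono_def)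
      then show ?thesis using w1 by blast
    next
      case 2
      then have "wsucc e < \<tau>" by (intro wlimit_wsucc_less assms(1))
      then show ?thesis using 2 Cons assms(1) less_wsucc[of e] wsucc_neq_w0[of e]
        by (auto simp: mono_def)
    qed
  qed
qed

lemma fs_cofinal_wsucc:
  fixes a z :: "'w tm"
  assumes a: "a \<noteq> T []" "\<not> tsucc a" and "w0 < \<tau>"
    and IH: "\<And>z. nf z \<Longrightarrow> lt z a \<Longrightarrow> \<exists>\<theta><\<tau>. lt z (fs a \<theta>)"
    and z: "nf z" "lt z (T [(a, wsucc c)])"
  shows "\<exists>\<theta><\<tau>. lt z (fs (T [(a, wsucc c)]) \<theta>)"
proof -
  have below_a: "\<exists>\<theta><\<tau>. lt z (T [(fs a \<theta>, w1)])" if z: "nf z" "lt z (T [(a, w1)])" for z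
  proof (cases z rule: tm_cases)
    case (Cons c' e zs)
    then have "lt c' a" "nf c'" using z w1_le_iff[of e] by (auto simp: not_less[symmetric])
    then obtain \<theta> where "\<theta> < \<tau>" "lt c' (fs a \<theta>)" using IH by blast
    then show ?thesis using Cons by auto
  qed (use \<open>w0 < \<tau>\<close> in \<open>auto simp: lt_nil_left\<close>)
  show ?thesis
  proof (cases "c = w0")
    case True
    then show ?thesis using below_a a z by (simp add: fs_wsucc mono_def w1_def)
  next
    case False
    then have fs: "fs (T [(a, wsucc c)]) \<theta> = T ((a, c) # [(fs a \<theta>, w1)])" for \<theta>
      using a by (simp add: fs_wsucc mono_def)
    show ?thesis
    proof (cases "lt z (T [(a, c)])")
      case True
      then show ?thesis using fs lt_append_right[of z "[(a, c)]"] \<open>w0 < \<tau>\<close> by auto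
    next
      case False
      then obtain zs where zs: "z = T ((a, c) # zs)"
        using z(2) by (cases z rule: tm_cases) (auto simp: less_wsucc_iff)
      then have "nf (T zs)" "lt (T zs) (T [(a, w1)])"
        using z(1) by (auto dest: nf_tail simp: lt_nil_left split: list.splits)
      then show ?thesis using below_a zs fs by (auto simp: lt_Cons_Cons)
    qed
  qed
qed

lemma fs_cofinal:
  fixes x z :: "'w tm"
  assumes "limit_cof x \<tau>" "nf z" "lt z x"
  shows "\<exists>\<theta><\<tau>. lt z (fs x \<theta>)"
proof -
  have w0: "w0 < \<tau>" using assms(1) w0_less_w1 by (auto simp: limit_cof_def)
  show ?thesis
    using assms
  proof (induction arbitrary: z rule: limit_cof_induct)
    case (limit a)
    then show ?case by (intro fs_cofinal_limit)
  next
    case (succ a c)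
    then show ?case using w0 by (intro fs_cofinal_wsucc) auto
  next
    case (cons a b y ys)
    obtain zs where zs: "z = T zs" by (cases z)
    consider "lt z (T [(a, b)])" | rest where "z = T ((a, b) # rest)" "lt (T rest) (T (y # ys))"
      using lt_append_cases[of zs "[(a, b)]" "y # ys"] cons.prems(2) zs by auto
    then show ?case
    proof cases
      case 1
      then show ?thesis using lt_append_right[of z "[(a, b)]"] w0 by auto
    next
      case 2
      then obtain \<theta> where "\<theta> < \<tau>" "lt (T rest) (fs (T (y # ys)) \<theta>)"
        using cons.IH cons.prems(1) nf_tail by blast
      then show ?thesis using 2 by (auto simp: lt_Cons_Cons)
    qed
  qed
qed

end

section \<open>Theta* at jump points\<close>

context omega1_club
begin

text \<open>The properties of d = Theta*(\<alpha> + \<beta>) that the approximation argument needs.\<close>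
definition jump_bound :: "'w tm \<Rightarrow> 'w tm \<Rightarrow> 'w \<Rightarrow> bool" where
  "jump_bound \<alpha> \<xi> d \<longleftrightarrow> d \<noteq> w0 \<and> star \<xi> \<le> d \<and> d < Theta X \<xi> \<and>
    (\<forall>z. nf z \<and> lt z \<xi> \<and> \<not> lt z \<alpha> \<longrightarrow> Theta X z \<le> d)"

lemma jump_bound_wsucc:
  fixes \<alpha> :: "'w tm"
  assumes \<alpha>: "nf \<alpha>" "Omega_multiple \<alpha>" and "w0 \<notin> X"
  shows "jump_bound \<alpha> (tadd \<alpha> (wsucc \<gamma>)) (Theta X (tadd \<alpha> \<gamma>))"
proof -
  let ?\<xi> = "tadd \<alpha> (wsucc \<gamma>)" and ?z = "tadd \<alpha> \<gamma>" and ?d = "Theta X (tadd \<alpha> \<gamma>)"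
  have nf: "nf ?\<xi>" "nf ?z" using \<alpha> by (simp_all add: nf_tadd_Omega_multiple)
  have Cs: "Cs ?\<xi> = Cs \<alpha> \<union> {wsucc \<gamma>}" "Cs ?z = Cs \<alpha> \<union> {\<gamma>}"
    using \<alpha>(2) by (simp_all add: Cs_tadd_Omega_multiple)
  have below_d: "\<forall>c\<in>Cs \<alpha> \<union> {\<gamma>}. c < ?d" using star_less_Theta[OF nf(2)] Cs(2) star_less_iff by metis
  have "?d \<noteq> w0" using Theta_mem[OF nf(2)] assms(3) by auto
  moreover have "star ?\<xi> \<le> ?d"
    using below_d wsucc_le[of \<gamma> ?d] unfolding star_le_iff Cs(1) by (auto intro: less_imp_le)
  moreover have "?d < Theta X ?\<xi>"
  proof (rule Theta_less_Theta[OF nf])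
    show "lt ?z ?\<xi>" using \<alpha>(2) less_wsucc by (rule lt_tadd_tadd)
    have "star ?z \<le> star ?\<xi>"
      using less_wsucc[of \<gamma>] Cs_le_star[of _ ?\<xi>] unfolding star_le_iff Cs(2) Cs(1)
      by (auto intro: less_imp_le order_trans)
    then show "star ?z < Theta X ?\<xi>" using star_less_Theta[OF nf(1)] by (rule le_less_trans)
  qed
  moreover have "Theta X z \<le> ?d" if z: "nf z" "lt z ?\<xi>" "\<not> lt z \<alpha>" for z
  proof -
    obtain \<gamma>' where \<gamma>': "\<gamma>' < wsucc \<gamma>" "z = tadd \<alpha> \<gamma>'" using lt_tadd_cases[OF \<alpha>(2) z] by blast
    show ?thesis
    proof (cases "\<gamma>' = \<gamma>")
      case False
      then have "\<gamma>' < \<gamma>" using \<gamma>'(1) by (simp add: less_wsucc_iff)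
      then have "lt z ?z" "star z < ?d"
        using \<alpha>(2) below_d \<gamma>'(2) lt_tadd_tadd
        by (auto simp: star_less_iff Cs_tadd_Omega_multiple)
      then show ?thesis using Theta_less_Theta[OF nf(2) z(1)] by (simp add: less_imp_le)
    qed (use \<gamma>' in simp)
  qed
  ultimately show ?thesis unfolding jump_bound_def by blast
qed

lemma jump_bound_FIX:
  fixes \<alpha> :: "'w tm"
  assumes \<alpha>: "nf \<alpha>" "Omega_multiple \<alpha>" "\<alpha> \<noteq> T []"
    and in_FIX: "tadd \<alpha> \<beta> \<in> FIX X" and not_succ: "\<not> (\<exists>\<gamma>. \<beta> = wsucc \<gamma>)"
  shows "jump_bound \<alpha> (tadd \<alpha> \<beta>) (star (tadd \<alpha> \<beta>))"
proof -
  let ?\<xi> = "tadd \<alpha> \<beta>"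
  have nf: "nf ?\<xi>" using \<alpha> by (simp add: nf_tadd_Omega_multiple)
  have Cs: "Cs ?\<xi> = Cs \<alpha> \<union> {\<beta>}" using \<alpha>(2) by (simp add: Cs_tadd_Omega_multiple)
  obtain g where g: "nf g" "lt ?\<xi> g" "Theta X g = star ?\<xi>"
    using in_FIX by (auto simp: FIX_def)
  have "star ?\<xi> \<noteq> w0"
  proof -
    have "star \<alpha> \<le> star ?\<xi>" using Cs by (intro star_mono) auto
    then show ?thesis using star_neq_w0[OF \<alpha>(1,3)] by (auto simp: le_less)
  qed
  moreover have "Theta X z \<le> star ?\<xi>" if z: "nf z" "lt z ?\<xi>" "\<not> lt z \<alpha>" for z
  proof -
    obtain \<gamma> where \<gamma>: "\<gamma> < \<beta>" "z = tadd \<alpha> \<gamma>" using lt_tadd_cases[OF \<alpha>(2) z] by blast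
    then have "wlimit \<beta>" using not_succ by (auto simp: wlimit_def)
    then have "fs ?\<xi> w1 = T (untm \<alpha> @ [(T [], w1)])"
      using \<alpha>(2) w0_less_w1 by (auto simp: tadd_Omega_multiple fs_append mono_def wlimit_def)
    then have "star \<alpha> \<le> star (fs ?\<xi> w1)" by (intro star_mono) (auto simp: Cs_append)
    then have "star \<alpha> < star ?\<xi>" using in_FIX by (auto simp: FIX_def)
    moreover have "\<gamma> < star ?\<xi>" using \<gamma>(1) Cs Cs_le_star[of \<beta> ?\<xi>] by auto
    ultimately have "star z < Theta X g"
      using g(3) \<gamma>(2) \<alpha>(2) Cs_le_star[of _ \<alpha>]
      by (auto simp: star_less_iff Cs_tadd_Omega_multiple intro: le_less_trans)
    moreover have "lt z g" using z(2) g(2) by (rule lt_trans)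
    ultimately show ?thesis using Theta_less_Theta[OF g(1) z(1)] g(3) by (simp add: less_imp_le)
  qed
  ultimately show ?thesis using star_less_Theta[OF nf] unfolding jump_bound_def by blast
qed

lemma jump_bound_ThetaStar:
  fixes \<alpha> :: "'w tm"
  assumes \<alpha>: "nf \<alpha>" "Omega_multiple \<alpha>" "\<alpha> \<noteq> T []"
    and "w0 \<notin> X" and jump: "tadd \<alpha> \<beta> \<in> JUMP X"
  shows "jump_bound \<alpha> (tadd \<alpha> \<beta>) (ThetaStar X (tadd \<alpha> \<beta>))"
proof (cases "\<exists>\<gamma>. \<beta> = wsucc \<gamma>")
  case True
  then obtain \<gamma> where \<gamma>: "\<beta> = wsucc \<gamma>" by blast
  then have "ThetaStar X (tadd \<alpha> \<beta>) = Theta X (tadd \<alpha> \<gamma>)"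
    using \<alpha> by (simp add: ThetaStar_def tsucc_tadd_iff tpred_tadd_wsucc wsucc_inject)
  then show ?thesis using jump_bound_wsucc[OF \<alpha>(1,2) assms(4)] \<gamma> by simp
next
  case False
  have "tadd \<alpha> \<beta> \<noteq> T []" using \<alpha>(2,3) by (cases \<alpha>) (simp add: tadd_Omega_multiple)
  then have in_FIX: "tadd \<alpha> \<beta> \<in> FIX X"
    using jump False \<alpha> by (auto simp: JUMP_def tsucc_tadd_iff)
  then have "ThetaStar X (tadd \<alpha> \<beta>) = star (tadd \<alpha> \<beta>)"
    using False \<alpha> by (simp add: ThetaStar_def tsucc_tadd_iff FIX_def to_w_cw)
  then show ?thesis using jump_bound_FIX[OF \<alpha> in_FIX False] by simp
qed

section \<open>Approximating Theta(\<alpha> + \<beta>) from below\<close>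

lemma nf_tadd_fs:
  fixes \<alpha> :: "'w tm"
  assumes "limit_cof \<alpha> \<tau>" "Omega_multiple \<alpha>" "d \<noteq> w0" "\<theta> < \<tau>"
  shows "nf (tadd (fs \<alpha> \<theta>) d)"
  using nf_tadd[of "untm (fs \<alpha> \<theta>)" d] nf_fs[OF assms(1,4)] fs_zero_exponent[OF assms(1,2)]
    wadd_w1_left_neq_w0 assms(3)
  by auto

lemma star_tadd_fs_less:
  fixes \<alpha> :: "'w tm"
  assumes "limit_cof \<alpha> \<tau>" "Omega_multiple \<alpha>"
    and L: "d < L" "wsucc d < L" "\<theta> < L" "star \<alpha> < L"
  shows "star (tadd (fs \<alpha> \<theta>) d) < L"
  unfolding star_less_iff
proof
  fix c assume "c \<in> Cs (tadd (fs \<alpha> \<theta>) d)"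
  then consider "c \<in> Cs (fs \<alpha> \<theta>)" | "c = d" | "c = wadd w1 d"
    using Cs_tadd_subset[of "untm (fs \<alpha> \<theta>)" d] fs_zero_exponent[OF assms(1,2)] by auto
  then show "c < L"
  proof cases
    case 1
    then show ?thesis using Cs_fs[OF assms(1)] L(3,4) by (auto intro: le_less_trans)
  next
    case 3
    then show ?thesis using wadd_w1_left_le L(2) by (rule_tac le_less_trans) auto
  qed (use L in simp)
qed

lemma Theta_tadd_fs_lower_bounds:
  fixes \<alpha> :: "'w tm"
  assumes \<alpha>: "limit_cof \<alpha> \<tau>" "Omega_multiple \<alpha>" and d: "d \<noteq> w0" and \<theta>: "\<theta> \<noteq> w0" "\<theta> < \<tau>"
  shows "d < Theta X (tadd (fs \<alpha> \<theta>) d)" "\<theta> < Theta X (tadd (fs \<alpha> \<theta>) d)"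
    "wsucc d < Theta X (tadd (fs \<alpha> \<theta>) d)"
proof -
  let ?F = "fs \<alpha> \<theta>"
  have F: "Omega_multiple ?F" "?F \<noteq> T []"
    using Omega_multiple_fs[OF \<alpha> \<theta>(1)] fs_neq_Nil[OF \<alpha>(1) \<theta>(1)] by auto
  have nf: "nf (tadd ?F d)" using nf_tadd_fs[OF \<alpha> d \<theta>(2)] .
  have "d \<in> Cs (tadd ?F d)" "\<theta> \<in> Cs (tadd ?F d)"
    using mem_Cs_fs[OF \<alpha>(1)] F(1) by (auto simp: Cs_tadd_Omega_multiple)
  then show d_less: "d < Theta X (tadd ?F d)" and "\<theta> < Theta X (tadd ?F d)"
    using star_less_Theta[OF nf] Cs_le_star by (auto intro: le_less_trans)
  show "wsucc d < Theta X (tadd ?F d)"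
    using wsucc_less_Theta[OF nf lt_cw_tadd[OF F] d_less] .
qed

lemma Theta_tadd_fs_less_Theta_tadd_fs:
  fixes \<alpha> :: "'w tm"
  assumes \<alpha>: "limit_cof \<alpha> \<tau>" "Omega_multiple \<alpha>" and d: "d \<noteq> w0" "star \<alpha> \<le> d"
    and \<theta>: "\<theta> < \<theta>'" "\<theta>' < \<tau>"
  shows "Theta X (tadd (fs \<alpha> \<theta>) d) < Theta X (tadd (fs \<alpha> \<theta>') d)"
proof (rule Theta_less_Theta)
  have \<theta>': "\<theta>' \<noteq> w0" using \<theta>(1) by auto
  show "nf (tadd (fs \<alpha> \<theta>') d)" "nf (tadd (fs \<alpha> \<theta>) d)"
    using \<theta> by (auto intro: nf_tadd_fs[OF \<alpha> d(1)])
  show "star (tadd (fs \<alpha> \<theta>) d) < Theta X (tadd (fs \<alpha> \<theta>') d)"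
    using Theta_tadd_fs_lower_bounds[OF \<alpha> d(1) \<theta>' \<theta>(2)] \<theta>(1) d(2)
    by (intro star_tadd_fs_less[OF \<alpha>]) auto
  have "lt (tadd (fs \<alpha> \<theta>) d) (fs \<alpha> \<theta>')"
    using lt_fs_fs[OF \<alpha>(1) \<theta>(1)] Omega_multiple_fs[OF \<alpha> \<theta>'] by (rule lt_tadd)
  moreover have "lt (fs \<alpha> \<theta>') (tadd (fs \<alpha> \<theta>') d)"
    using Omega_multiple_fs[OF \<alpha> \<theta>'] d(1) by (rule lt_tadd_self)
  ultimately show "lt (tadd (fs \<alpha> \<theta>) d) (tadd (fs \<alpha> \<theta>') d)" by (rule lt_trans)
qed

lemma strict_mono_Theta_tadd_fs:
  fixes \<alpha> :: "'w tm" and t :: "nat \<Rightarrow> 'w"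
  assumes \<alpha>: "limit_cof \<alpha> \<tau>" "Omega_multiple \<alpha>" and d: "d \<noteq> w0" "star \<alpha> \<le> d"
    and t: "strict_mono t" "wsup (range t) = \<tau>"
  shows "strict_mono (\<lambda>n. Theta X (tadd (fs \<alpha> (t n)) d))"
proof (rule strict_monoI)
  fix m n :: nat assume "m < n"
  then show "Theta X (tadd (fs \<alpha> (t m)) d) < Theta X (tadd (fs \<alpha> (t n)) d)"
    using less_wsup[OF t(1), of n] t by (intro Theta_tadd_fs_less_Theta_tadd_fs[OF \<alpha> d])
      (auto simp: strict_mono_less)
qed

lemma Theta_tadd_fs_less_Theta_tadd:
  fixes \<alpha> :: "'w tm"
  assumes \<alpha>: "limit_cof \<alpha> \<tau>" "Omega_multiple \<alpha>" and d: "d \<noteq> w0" "d < Theta X (tadd \<alpha> \<beta>)"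
    and \<theta>: "\<theta> < \<tau>"
  shows "Theta X (tadd (fs \<alpha> \<theta>) d) < Theta X (tadd \<alpha> \<beta>)"
proof (rule Theta_less_Theta)
  have nf\<alpha>: "nf \<alpha>" "\<alpha> \<noteq> T []" using \<alpha>(1) by (auto simp: limit_cof_def cw_def split: if_splits)
  show nf\<xi>: "nf (tadd \<alpha> \<beta>)" using nf\<alpha>(1) \<alpha>(2) by (rule nf_tadd_Omega_multiple)
  show "nf (tadd (fs \<alpha> \<theta>) d)" using \<theta> by (rule nf_tadd_fs[OF \<alpha> d(1)])
  have "star \<alpha> < Theta X (tadd \<alpha> \<beta>)"
    using star_le_star_tadd[OF \<alpha>(2)] star_less_Theta[OF nf\<xi>] by (rule le_less_trans)
  moreover have "\<theta> < star \<alpha>" using \<theta> tau_mem_Cs[OF \<alpha>(1)] Cs_le_star by (blast intro: less_le_trans)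
  moreover have "wsucc d < Theta X (tadd \<alpha> \<beta>)"
    using wsucc_less_Theta[OF nf\<xi> lt_cw_tadd[OF \<alpha>(2) nf\<alpha>(2)] d(2)] .
  ultimately show "star (tadd (fs \<alpha> \<theta>) d) < Theta X (tadd \<alpha> \<beta>)"
    using d(2) by (intro star_tadd_fs_less[OF \<alpha>]) auto
  have "lt (tadd (fs \<alpha> \<theta>) d) \<alpha>" using lt_fs[OF \<alpha>(1) \<theta>] \<alpha>(2) by (rule lt_tadd)
  then show "lt (tadd (fs \<alpha> \<theta>) d) (tadd \<alpha> \<beta>)" using \<alpha>(2) by (intro lt_imp_lt_tadd)
qed

lemma Theta_less_wsup_Theta_tadd_fs:
  fixes \<alpha> z :: "'w tm" and t :: "nat \<Rightarrow> 'w"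
  assumes \<alpha>: "limit_cof \<alpha> \<tau>" "Omega_multiple \<alpha>" and d: "d \<noteq> w0" "star \<alpha> \<le> d"
    and t: "strict_mono t" "wsup (range t) = \<tau>"
    and z: "nf z" "lt z \<alpha>" "star z < wsup (range (\<lambda>n. Theta X (tadd (fs \<alpha> (t n)) d)))"
  shows "Theta X z < wsup (range (\<lambda>n. Theta X (tadd (fs \<alpha> (t n)) d)))"
    (is "_ < wsup (range ?u)")
proof -
  have u: "strict_mono ?u" by (rule strict_mono_Theta_tadd_fs[OF \<alpha> d t])
  obtain \<theta> where \<theta>: "\<theta> < \<tau>" "lt z (fs \<alpha> \<theta>)" using fs_cofinal[OF \<alpha>(1) z(1,2)] by blast
  obtain m where m: "\<theta> < t m" using less_wsupD \<theta>(1) t(2) by metis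
  obtain k where k: "star z < ?u k" using less_wsupD z(3) by blast
  \<comment> \<open>Suc makes t j nonzero, so that fs \<alpha> (t j) is a proper prefix of tadd (fs \<alpha> (t j)) d.\<close>
  define j where "j = Suc (max m k)"
  have t_j: "t j \<noteq> w0" "t j < \<tau>"
    using t less_wsup[OF t(1), of j] strict_mono_less[OF t(1), of 0 j] by (auto simp: j_def)
  have "t m \<le> t j" using t(1) by (simp add: j_def strict_mono_less_eq)
  then have "lt (fs \<alpha> \<theta>) (fs \<alpha> (t j))" using m by (intro lt_fs_fs[OF \<alpha>(1)]) simp
  then have "lt z (fs \<alpha> (t j))" using \<theta>(2) lt_trans by blast
  moreover have "lt (fs \<alpha> (t j)) (tadd (fs \<alpha> (t j)) d)"
    using Omega_multiple_fs[OF \<alpha> t_j(1)] d(1) by (rule lt_tadd_self)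
  ultimately have "lt z (tadd (fs \<alpha> (t j)) d)" by (rule lt_trans)
  moreover have "?u k \<le> ?u j" using strict_mono_less_eq[OF u, of k j] by (simp add: j_def)
  then have "star z < ?u j" using k by simp
  ultimately have "Theta X z < ?u j"
    using Theta_less_Theta[OF nf_tadd_fs[OF \<alpha> d(1) t_j(2)] z(1)] by blast
  then show ?thesis using less_wsup[OF u] by (rule less_trans)
qed

lemma Theta_tadd_le_wsup:
  fixes \<alpha> :: "'w tm" and t :: "nat \<Rightarrow> 'w"
  assumes \<alpha>: "limit_cof \<alpha> \<tau>" "Omega_multiple \<alpha>" and d: "jump_bound \<alpha> (tadd \<alpha> \<beta>) d"
    and t: "strict_mono t" "wsup (range t) = \<tau>"
  shows "Theta X (tadd \<alpha> \<beta>) \<le> wsup (range (\<lambda>n. Theta X (tadd (fs \<alpha> (t n)) d)))"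
    (is "_ \<le> wsup (range ?u)")
proof (rule Theta_le)
  have d_props: "d \<noteq> w0" "star (tadd \<alpha> \<beta>) \<le> d"
    "\<And>z. nf z \<Longrightarrow> lt z (tadd \<alpha> \<beta>) \<Longrightarrow> \<not> lt z \<alpha> \<Longrightarrow> Theta X z \<le> d"
    using d by (auto simp: jump_bound_def)
  have star_\<alpha>: "star \<alpha> \<le> d" using star_le_star_tadd[OF \<alpha>(2)] d_props(2) by (rule order_trans)
  have u: "strict_mono ?u" by (rule strict_mono_Theta_tadd_fs[OF \<alpha> d_props(1) star_\<alpha> t])
  have "t 1 \<noteq> w0" "t 1 < \<tau>" using t less_wsup[OF t(1), of 1] strict_mono_less[OF t(1), of 0 1] by auto
  then have "d < ?u 1" by (rule Theta_tadd_fs_lower_bounds(1)[OF \<alpha> d_props(1)])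
  then have d_less: "d < wsup (range ?u)" using less_wsup[OF u, of 1] by simp
  show "nf (tadd \<alpha> \<beta>)" using \<alpha> by (simp add: limit_cof_def nf_tadd_Omega_multiple)
  show "wsup (range ?u) \<in> X"
    using club_wsup_mem[OF club u] Theta_mem nf_tadd_fs[OF \<alpha> d_props(1)] less_wsup[OF t(1)] t(2)
    by simp
  show "star (tadd \<alpha> \<beta>) < wsup (range ?u)" using d_props(2) d_less by simp
  fix z assume z: "nf z" "lt z (tadd \<alpha> \<beta>)" "star z < wsup (range ?u)"
  show "Theta X z < wsup (range ?u)"
  proof (cases "lt z \<alpha>")
    case False
    then show ?thesis using d_props(3) z d_less by (meson le_less_trans)
  next
    case True
    then show ?thesis using Theta_less_wsup_Theta_tadd_fs[OF \<alpha> d_props(1) star_\<alpha> t z(1) _ z(3)] by simp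
  qed
qed

end

theorem lemma4p6:
  fixes X :: "'w::wellorder set" and \<alpha> :: "'w tm" and \<beta> \<tau> :: 'w and t :: "nat \<Rightarrow> 'w"
  assumes "omega1_like TYPE('w)"
    and "club X" and "w0 \<notin> X"
    and "nf \<alpha>" and "\<alpha> \<noteq> T []" and "\<forall>(a, b) \<in> set (untm \<alpha>). a \<noteq> T []"
    and "tau \<alpha> = cw \<tau>"
    and "tadd \<alpha> \<beta> \<in> hatEps X \<inter> JUMP X"
    and "strict_mono t" and "wsup (range t) = \<tau>"
  shows "strict_mono (\<lambda>n. Theta X (tadd (fs \<alpha> (t n)) (ThetaStar X (tadd \<alpha> \<beta>))))
       \<and> wsup (range (\<lambda>n. Theta X (tadd (fs \<alpha> (t n)) (ThetaStar X (tadd \<alpha> \<beta>)))))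
           = Theta X (tadd \<alpha> \<beta>)"
proof -
  interpret omega1_club "TYPE('w)" X using assms(1,2) by unfold_locales
  have \<alpha>: "limit_cof \<alpha> \<tau>" "Omega_multiple \<alpha>"
    using assms(4,6,7,9,10) w1_less_wsup by (auto simp: limit_cof_def Omega_multiple_def)
  define d where "d = ThetaStar X (tadd \<alpha> \<beta>)"
  have d: "jump_bound \<alpha> (tadd \<alpha> \<beta>) d"
    unfolding d_def using jump_bound_ThetaStar assms(3,4,5,8) \<alpha>(2) by blast
  then have d_props: "d \<noteq> w0" "star (tadd \<alpha> \<beta>) \<le> d" "d < Theta X (tadd \<alpha> \<beta>)"
    by (auto simp: jump_bound_def)
  have "star \<alpha> \<le> d" using star_le_star_tadd[OF \<alpha>(2)] d_props(2) by (rule order_trans)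
  let ?u = "\<lambda>n. Theta X (tadd (fs \<alpha> (t n)) d)"
  have t_less: "t n < \<tau>" for n using less_wsup[OF assms(9)] assms(10) by simp
  have "strict_mono ?u"
    by (rule strict_mono_Theta_tadd_fs[OF \<alpha> d_props(1) \<open>star \<alpha> \<le> d\<close> assms(9,10)])
  moreover have "wsup (range ?u) \<le> Theta X (tadd \<alpha> \<beta>)"
    using Theta_tadd_fs_less_Theta_tadd[OF \<alpha> d_props(1,3) t_less] by (intro wsup_le less_imp_le)
  moreover have "Theta X (tadd \<alpha> \<beta>) \<le> wsup (range ?u)"
    using Theta_tadd_le_wsup[OF \<alpha> d assms(9,10)] .
  ultimately show ?thesis unfolding d_def by simp
qed

end
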